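(* Let $g_y(\omega)=\frac{\sigma_\epsilon^2}{2\pi}|\kappa(e^{i\omega})|^2$, $-\pi\le\omega\le\pi$, where $\sigma_\epsilon^2>0$ and $\kappa(z)=\sum_{s\ge0}\kappa_sz^s$ with $\kappa_0=1$, $\sum_s|\kappa_s|<\infty$ and $\kappa(z)\ne0$ for $|z|\le1$, so that $0<m\le g_y(\omega)\le M<\infty$ for all $\omega$, for some constants $m,M$. For $\beta\in[0,1]$ and $\theta\in\Theta=(-1,1)$ let $$f(\theta,\beta)=-\int_{-\pi}^{\pi}\frac{e^{i\omega}+\beta\theta}{|(1+\theta e^{i\omega})(1+\beta\theta e^{i\omega})|^2}\,g_y(\omega)\,d\omega,\qquad \bar L(\theta)=\int_{-\pi}^{\pi}\frac{g_y(\omega)}{|1+\theta e^{i\omega}|^2}\,d\omega .$$ Then for each $\beta\in[0,1]$, $f(\cdot,\beta)$ is infinitely differentiable on $\Theta$, and $\Theta_0^\beta=\{\theta\in\Theta: f(\theta,\beta)=0\}$ is a nonempty compact subset of $\Theta$. In the case $\beta=1$, $\Theta_0^1$ contains the (nonempty) set of minimizers of $\bar L$ over $\Theta$. *)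

theory Defs
  imports "HOL-Analysis.Analysis"
begin

definition kappa_fun :: "(nat \<Rightarrow> real) \<Rightarrow> complex \<Rightarrow> complex" where
  "kappa_fun \<kappa> z = (\<Sum>s. complex_of_real (\<kappa> s) * z ^ s)"

definition g_y :: "real \<Rightarrow> (nat \<Rightarrow> real) \<Rightarrow> real \<Rightarrow> real" where
  "g_y \<sigma>2 \<kappa> \<omega> = \<sigma>2 / (2 * pi) * (cmod (kappa_fun \<kappa> (exp (\<i> * complex_of_real \<omega>))))\<^sup>2"

definition f_fun :: "real \<Rightarrow> (nat \<Rightarrow> real) \<Rightarrow> real \<Rightarrow> real \<Rightarrow> complex" where
  "f_fun \<sigma>2 \<kappa> \<theta> \<beta> = - integral {-pi..pi} (\<lambda>\<omega>.
      (exp (\<i> * complex_of_real \<omega>) + complex_of_real (\<beta> * \<theta>)) /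
      complex_of_real ((cmod ((1 + complex_of_real \<theta> * exp (\<i> * complex_of_real \<omega>)) *
                              (1 + complex_of_real (\<beta> * \<theta>) * exp (\<i> * complex_of_real \<omega>))))\<^sup>2)
      * complex_of_real (g_y \<sigma>2 \<kappa> \<omega>))"

definition Lbar :: "real \<Rightarrow> (nat \<Rightarrow> real) \<Rightarrow> real \<Rightarrow> real" where
  "Lbar \<sigma>2 \<kappa> \<theta> = integral {-pi..pi} (\<lambda>\<omega>.
      g_y \<sigma>2 \<kappa> \<omega> / (cmod (1 + complex_of_real \<theta> * exp (\<i> * complex_of_real \<omega>)))\<^sup>2)"

definition C_infinity_on :: "real set \<Rightarrow> (real \<Rightarrow> 'a::real_normed_vector) \<Rightarrow> bool" where
  "C_infinity_on S F \<longleftrightarrow> (\<exists>D :: nat \<Rightarrow> real \<Rightarrow> 'a. (\<forall>x\<in>S. D 0 x = F x) \<and>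
      (\<forall>n. \<forall>x\<in>S. (D n has_vector_derivative D (Suc n) x) (at x)))"

end

theory Submission
  imports Defs "HOL-Complex_Analysis.Complex_Analysis"
begin

(* For real \<theta> and e = e^(i\<omega>) we have e |1 + \<theta> e|^2 = (1 + \<theta> e)(e + \<theta>), so the integrand of
   f(\<theta>, \<beta>) is e^2 g(\<omega>) / ((1 + \<theta> e)(e + \<theta>)(1 + \<beta>\<theta> e)). This is holomorphic in \<theta> on the
   unit disc, hence f(., \<beta>) is C^\<infinity> on (-1, 1).
   Since g is even, f is real: f(\<theta>, \<beta>) = -R(\<beta>, \<theta>) with
   R(\<beta>, \<theta>) = \<integral> (cos \<omega> + \<beta>\<theta>) g(\<omega>) / (|1 + \<theta> e|^2 |1 + \<beta>\<theta> e|^2) d\<omega>.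
   With l = 1 - |\<theta>|, the kernel 1/|1 + \<theta> e|^2 exceeds 1/(2 l^2) on an interval of length l,
   so \<integral> |1 + \<theta> e|^(-2n) \<ge> l/(2 l^2)^n. A pointwise bound of \<theta> times the integrand of R by
   C - c |1 + \<theta> e|^(-2n) (n = 1 if \<beta> < 1, n = 2 if \<beta> = 1) then gives \<theta> R(\<beta>, \<theta>) < 0 for |\<theta>|
   close to 1. Hence R(\<beta>, .) changes sign, and its zeros lie in a compact [-b, b] \<subset> (-1, 1).
   Similarly Lbar(\<theta>) \<ge> min g / (2 l) tends to \<infinity> at the boundary, so Lbar attains its minimum,
   where its derivative -2 R(1, .) vanishes. *)

lemma cos_ge_one_minus_half_square: "1 - x\<^sup>2 / 2 \<le> cos (x::real)"
proof -
  have "cos x = 1 - 2 * (sin (x/2))\<^sup>2"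
    using cos_double_sin[of "x/2"] by simp
  moreover have "(sin (x/2))\<^sup>2 \<le> (x/2)\<^sup>2"
    using abs_sin_x_le_abs_x[of "x/2"] by (metis abs_le_square_iff)
  ultimately show ?thesis by (simp add: power_divide)
qed

lemma norm_less_imp_add_nonzero:
  fixes w z :: "'a::real_normed_vector"
  assumes "norm z < norm w"
  shows "w + z \<noteq> 0"
  using assms by (metis add_eq_0_iff norm_minus_cancel less_irrefl)

lemma abs_mult_less_one:
  fixes \<beta> \<theta> :: "'a::linordered_idom"
  assumes "\<bar>\<beta>\<bar> \<le> 1" "\<bar>\<theta>\<bar> < 1"
  shows "\<bar>\<beta> * \<theta>\<bar> < 1"
  using assms by (simp add: abs_mult) (meson abs_ge_zero le_less_trans mult_left_le_one_le)

lemma integral_odd_eq_0: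
  fixes h :: "real \<Rightarrow> 'a::euclidean_space"
  assumes "\<And>x. h (-x) = - h x"
  shows "integral {-a..a} h = 0"
proof -
  have "integral {-a..a} h = integral {-a..a} (\<lambda>x. h (-x))"
    using Henstock_Kurzweil_Integration.integral_reflect_real[of a "-a" h] by simp
  also have "\<dots> = - integral {-a..a} h"
    by (simp add: assms)
  finally show ?thesis
    by (metis eq_neg_iff_add_eq_0 scaleR_2 scaleR_eq_0_iff zero_neq_numeral)
qed

lemma integral_ge_on_subinterval:
  fixes h :: "real \<Rightarrow> real"
  assumes "continuous_on {a..b} h" "\<And>x. x \<in> {a..b} \<Longrightarrow> 0 \<le> h x"
    and "a \<le> c" "c \<le> d" "d \<le> b" "\<And>x. x \<in> {c..d} \<Longrightarrow> y \<le> h x"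
  shows "y * (d - c) \<le> integral {a..b} h"
proof -
  have sub: "{c..d} \<subseteq> {a..b}"
    using assms by auto
  have "h integrable_on {c..d}"
    using continuous_on_subset[OF assms(1) sub] by (rule integrable_continuous_interval)
  then have "integral {c..d} (\<lambda>x. y) \<le> integral {c..d} h"
    using assms(6) by (intro integral_le) auto
  also have "\<dots> \<le> integral {a..b} h"
    using sub assms \<open>h integrable_on {c..d}\<close> integrable_continuous_interval[OF assms(1)]
    by (intro integral_subset_le) auto
  finally show ?thesis
    using assms by (simp add: mult.commute)
qed

lemma integral_le_affine_bound:
  fixes F h :: "real \<Rightarrow> real"
  assumes "continuous_on {a..b} F" "continuous_on {a..b} h" "a \<le> b"
    and "\<And>x. x \<in> {a..b} \<Longrightarrow> F x \<le> C - c * h x"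
  shows "integral {a..b} F \<le> C * (b - a) - c * integral {a..b} h"
proof -
  have h: "h integrable_on {a..b}"
    using assms(2) by (rule integrable_continuous_interval)
  have "integral {a..b} F \<le> integral {a..b} (\<lambda>x. C - c * h x)"
    using assms h by (intro integral_le integrable_continuous_interval integrable_diff integrable_on_mult_right)
      (auto simp: integrable_const_ivl)
  also have "\<dots> = integral {a..b} (\<lambda>x. C) - integral {a..b} (\<lambda>x. c * h x)"
    using h by (intro integral_diff integrable_on_mult_right) (auto simp: integrable_const_ivl)
  also have "\<dots> = C * (b - a) - c * integral {a..b} h"
    using assms(3) by simp
  finally show ?thesis .
qed

lemma C_infinity_on_imp_continuous_on:
  assumes "C_infinity_on S F"
  shows "continuous_on S F"
proof -
  obtain D where D0: "\<forall>x\<in>S. D 0 x = F x"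
    and D: "\<forall>n. \<forall>x\<in>S. (D n has_vector_derivative D (Suc n) x) (at x)"
    using assms unfolding C_infinity_on_def by blast
  have "continuous_on S (D 0)"
    using D by (intro continuous_at_imp_continuous_on) (auto dest: has_vector_derivative_continuous)
  then show ?thesis
    using D0 by (auto intro: continuous_on_eq)
qed

lemma C_infinity_on_holomorphic_of_real:
  assumes "F holomorphic_on S" "open S" "\<And>x. x \<in> T \<Longrightarrow> complex_of_real x \<in> S"
  shows "C_infinity_on T (\<lambda>x. F (complex_of_real x))"
  unfolding C_infinity_on_def
proof (intro exI conjI ballI allI)
  fix n and x assume "x \<in> T"
  have "(deriv ^^ n) F holomorphic_on S"
    using assms(1,2) by (rule holomorphic_higher_deriv)
  then have "((deriv ^^ n) F has_field_derivative (deriv ^^ Suc n) F (complex_of_real x)) (at (complex_of_real x))"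
    using assms(2,3) \<open>x \<in> T\<close> by (auto intro: holomorphic_derivI)
  then show "((\<lambda>x. (deriv ^^ n) F (complex_of_real x)) has_vector_derivative
      (deriv ^^ Suc n) F (complex_of_real x)) (at x)"
    by (simp add: has_vector_derivative_real_field)
qed simp

lemma zeros_nonempty_compact_if_sign_near_boundary:
  fixes R :: "real \<Rightarrow> real"
  assumes cont: "continuous_on {-1<..<1} R" and "a < 1"
    and sign: "\<And>\<theta>. a < \<bar>\<theta>\<bar> \<Longrightarrow> \<bar>\<theta>\<bar> < 1 \<Longrightarrow> \<theta> * R \<theta> < 0"
  shows "{\<theta>\<in>{-1<..<1}. R \<theta> = 0} \<noteq> {}" "compact {\<theta>\<in>{-1<..<1}. R \<theta> = 0}"
proof -
  define b where "b = (max 0 a + 1) / 2"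
  have b: "0 < b" "a < b" "b < 1"
    using \<open>a < 1\<close> by (auto simp: b_def)
  have "b * R b < 0" "-b * R (-b) < 0"
    using sign[of b] sign[of "-b"] b by auto
  then have "R b \<le> 0" "0 \<le> R (-b)"
    using b by (auto simp: mult_less_0_iff zero_less_mult_iff)
  moreover have cont_b: "continuous_on {-b..b} R"
    using b by (intro continuous_on_subset[OF cont]) auto
  ultimately obtain x where x: "-b \<le> x" "x \<le> b" "R x = 0"
    using IVT2'[of R b 0 "-b"] b by auto
  have eq: "{\<theta>\<in>{-1<..<1}. R \<theta> = 0} = {-b..b} \<inter> R -` {0}"
  proof
    show "{\<theta>\<in>{-1<..<1}. R \<theta> = 0} \<subseteq> {-b..b} \<inter> R -` {0}"
    proof safe
      fix \<theta> :: real
      assume "\<theta> \<in> {-1<..<1}" "R \<theta> = 0"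
      then have "\<not> a < \<bar>\<theta>\<bar>"
        using sign[of \<theta>] by (auto simp: abs_less_iff)
      then have "\<bar>\<theta>\<bar> \<le> b"
        using b by linarith
      then show "\<theta> \<in> {-b..b}"
        by (simp add: abs_le_iff)
    qed simp
    show "{-b..b} \<inter> R -` {0} \<subseteq> {\<theta>\<in>{-1<..<1}. R \<theta> = 0}"
      using b by auto
  qed
  show "{\<theta>\<in>{-1<..<1}. R \<theta> = 0} \<noteq> {}"
    unfolding eq using x by auto
  show "compact {\<theta>\<in>{-1<..<1}. R \<theta> = 0}"
    unfolding eq compact_eq_bounded_closed
    using continuous_closed_preimage[OF cont_b] by (auto intro: bounded_subset[OF bounded_closed_interval])
qed

lemma minimizers_nonempty_if_grows_near_boundary:
  fixes L :: "real \<Rightarrow> real"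
  assumes cont: "continuous_on {-1<..<1} L" and "a < 1"
    and grows: "\<And>\<theta>. a < \<bar>\<theta>\<bar> \<Longrightarrow> \<bar>\<theta>\<bar> < 1 \<Longrightarrow> L 0 < L \<theta>"
  shows "{\<theta>\<in>{-1<..<1}. \<forall>\<theta>'\<in>{-1<..<1}. L \<theta> \<le> L \<theta>'} \<noteq> {}"
proof -
  define b where "b = max 0 a"
  have b: "0 \<le> b" "b < 1"
    using \<open>a < 1\<close> by (auto simp: b_def)
  have "continuous_on {-b..b} L"
    using b by (intro continuous_on_subset[OF cont]) auto
  then obtain x where x: "x \<in> {-b..b}" "\<forall>y\<in>{-b..b}. L x \<le> L y"
    using continuous_attains_inf[OF compact_Icc, of "-b" b L] b by auto
  have "L x \<le> L y" if "y \<in> {-1<..<1}" for y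
  proof (cases "\<bar>y\<bar> \<le> b")
    case True
    then show ?thesis
      using x by (auto simp: abs_le_iff)
  next
    case False
    then have "L 0 < L y"
      using that grows by (auto simp: b_def)
    moreover have "L x \<le> L 0"
      using x b by auto
    ultimately show ?thesis
      by simp
  qed
  moreover have "x \<in> {-1<..<1}"
    using x b by auto
  ultimately show ?thesis
    by blast
qed

section \<open>The squared gain of the filter 1 + t z on the unit circle\<close>

definition ma1_gain :: "real \<Rightarrow> real \<Rightarrow> real" where
  "ma1_gain t \<omega> = 1 + 2 * t * cos \<omega> + t\<^sup>2"

lemma cmod_one_plus_cis_square: "(cmod (1 + complex_of_real t * cis \<omega>))\<^sup>2 = ma1_gain t \<omega>"
proof -
  have "(cmod (1 + complex_of_real t * cis \<omega>))\<^sup>2 = (1 + t * cos \<omega>)\<^sup>2 + (t * sin \<omega>)\<^sup>2"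
    by (simp add: cmod_power2)
  also have "\<dots> = 1 + 2 * t * cos \<omega> + t\<^sup>2 * ((sin \<omega>)\<^sup>2 + (cos \<omega>)\<^sup>2)"
    by algebra
  also have "\<dots> = ma1_gain t \<omega>"
    by (simp add: ma1_gain_def)
  finally show ?thesis .
qed

lemma ma1_gain_minus: "ma1_gain (-t) \<omega> = ma1_gain t (pi - \<omega>)"
  by (simp add: ma1_gain_def)

lemma continuous_on_ma1_gain [continuous_intros]:
  fixes f h :: "'a::t2_space \<Rightarrow> real"
  shows "continuous_on S f \<Longrightarrow> continuous_on S h \<Longrightarrow> continuous_on S (\<lambda>x. ma1_gain (f x) (h x))"
  unfolding ma1_gain_def by (intro continuous_intros)

lemma ma1_gain_lower: "\<bar>t\<bar> \<le> 1 \<Longrightarrow> (1 - \<bar>t\<bar>)\<^sup>2 \<le> ma1_gain t \<omega>"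
proof -
  have "- \<bar>t\<bar> \<le> t * cos \<omega>"
    using abs_cos_le_one[of \<omega>] by (metis abs_le_iff abs_mult minus_le_iff mult.commute mult_left_le abs_ge_zero)
  then show ?thesis unfolding ma1_gain_def by (simp add: power2_eq_square algebra_simps)
qed

lemma ma1_gain_upper: "ma1_gain t \<omega> \<le> (1 + \<bar>t\<bar>)\<^sup>2"
proof -
  have "t * cos \<omega> \<le> \<bar>t\<bar>"
    using abs_cos_le_one[of \<omega>] by (metis abs_le_iff abs_mult mult.commute mult_left_le abs_ge_zero)
  then show ?thesis unfolding ma1_gain_def by (simp add: power2_eq_square algebra_simps)
qed

lemma ma1_gain_pos: "\<bar>t\<bar> < 1 \<Longrightarrow> 0 < ma1_gain t \<omega>"
  using ma1_gain_lower[of t \<omega>] by (smt (verit) zero_less_power2)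

lemma ma1_gain_mult_pos:
  assumes "\<bar>\<theta>\<bar> < 1" "\<bar>\<beta>\<bar> \<le> 1"
  shows "0 < ma1_gain \<theta> \<omega> * ma1_gain (\<beta> * \<theta>) \<omega>"
  using assms abs_mult_less_one[OF assms(2,1)] by (simp add: ma1_gain_pos)

lemma ma1_gain_small_near_pole:
  assumes "\<bar>t\<bar> < 1"
  obtains a where "-pi \<le> a" "a + (1 - \<bar>t\<bar>) \<le> pi"
    "\<And>\<omega>. \<omega> \<in> {a..a + (1 - \<bar>t\<bar>)} \<Longrightarrow> ma1_gain t \<omega> \<le> 2 * (1 - \<bar>t\<bar>)\<^sup>2"
proof -
  define l where "l = 1 - \<bar>t\<bar>"
  have l: "0 < l" "l \<le> 1" using assms by (auto simp: l_def)
  have near_0: "ma1_gain (- \<bar>t\<bar>) \<omega> \<le> 2 * l\<^sup>2" if "\<omega> \<in> {0..l}" for \<omega>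
  proof -
    have "\<omega>\<^sup>2 \<le> l\<^sup>2"
      using that by (intro power_mono) auto
    then have "1 - l\<^sup>2 / 2 \<le> cos \<omega>"
      using cos_ge_one_minus_half_square[of \<omega>] by linarith
    then have "ma1_gain (- \<bar>t\<bar>) \<omega> \<le> 1 - 2 * (1 - l) * (1 - l\<^sup>2 / 2) + (1 - l)\<^sup>2"
      using l unfolding ma1_gain_def l_def by (simp add: mult_left_mono)
    also have "\<dots> = l\<^sup>2 + (1 - l) * l\<^sup>2"
      by (simp add: power2_eq_square algebra_simps)
    also have "\<dots> \<le> 2 * l\<^sup>2"
      using l by (simp add: mult_left_le_one_le)
    finally show ?thesis .
  qed
  show ?thesis
  proof (cases "t \<le> 0")
    case True
    then show ?thesis
      using that[of 0] near_0 l pi_gt3 by (auto simp: l_def)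
  next
    case False
    have "ma1_gain t \<omega> \<le> 2 * l\<^sup>2" if "\<omega> \<in> {pi - l..pi - l + l}" for \<omega>
      using near_0[of "pi - \<omega>"] that False ma1_gain_minus[of "- t" "\<omega>"] by simp
    then show ?thesis
      using that[of "pi - l"] l pi_gt3 by (simp add: l_def)
  qed
qed

lemma integral_inverse_ma1_gain_power_ge:
  assumes "\<bar>t\<bar> < 1"
  shows "(1 - \<bar>t\<bar>) / (2 * (1 - \<bar>t\<bar>)\<^sup>2) ^ n \<le> integral {-pi..pi} (\<lambda>\<omega>. 1 / ma1_gain t \<omega> ^ n)"
proof -
  define l where "l = 1 - \<bar>t\<bar>"
  have l: "0 < l"
    using assms by (simp add: l_def)
  obtain a where a: "-pi \<le> a" "a + l \<le> pi" "\<And>\<omega>. \<omega> \<in> {a..a + l} \<Longrightarrow> ma1_gain t \<omega> \<le> 2 * l\<^sup>2"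
    using ma1_gain_small_near_pole[OF assms] unfolding l_def by blast
  have pos: "0 < ma1_gain t \<omega>" for \<omega>
    using assms by (rule ma1_gain_pos)
  have nz: "ma1_gain t \<omega> \<noteq> 0" for \<omega>
    using pos[of \<omega>] by simp
  have "1 / (2 * l\<^sup>2) ^ n \<le> 1 / ma1_gain t \<omega> ^ n" if "\<omega> \<in> {a..a + l}" for \<omega>
    using a(3)[OF that] pos[of \<omega>] l by (intro divide_left_mono power_mono mult_pos_pos zero_less_power) auto
  then have "1 / (2 * l\<^sup>2) ^ n * (a + l - a) \<le> integral {-pi..pi} (\<lambda>\<omega>. 1 / ma1_gain t \<omega> ^ n)"
    using a pos l by (intro integral_ge_on_subinterval continuous_intros) (auto simp: less_imp_le nz)
  then show ?thesis
    by (simp add: l_def)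
qed

lemma ma1_gain_scaled_bounds:
  assumes "0 \<le> \<beta>" "\<beta> < 1" "\<bar>\<theta>\<bar> \<le> 1"
  shows "(1 - \<beta>)\<^sup>2 \<le> ma1_gain (\<beta> * \<theta>) \<omega>" "ma1_gain (\<beta> * \<theta>) \<omega> \<le> 4"
proof -
  have "\<bar>\<beta> * \<theta>\<bar> \<le> \<beta>"
    using assms by (simp add: abs_mult mult_left_le)
  then have "(1 - \<beta>)\<^sup>2 \<le> (1 - \<bar>\<beta> * \<theta>\<bar>)\<^sup>2" "(1 + \<bar>\<beta> * \<theta>\<bar>)\<^sup>2 \<le> 2\<^sup>2"
    using assms by (intro power_mono; simp)+
  moreover have "\<bar>\<beta> * \<theta>\<bar> \<le> 1"
    using \<open>\<bar>\<beta> * \<theta>\<bar> \<le> \<beta>\<close> assms by simp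
  ultimately show "(1 - \<beta>)\<^sup>2 \<le> ma1_gain (\<beta> * \<theta>) \<omega>" "ma1_gain (\<beta> * \<theta>) \<omega> \<le> 4"
    using ma1_gain_lower[of "\<beta> * \<theta>" \<omega>] ma1_gain_upper[of "\<beta> * \<theta>" \<omega>] by simp_all
qed

lemma theta_R_integrand_le_lt1:
  assumes \<beta>: "0 \<le> \<beta>" "\<beta> < 1" and \<theta>: "1/2 \<le> \<bar>\<theta>\<bar>" "\<bar>\<theta>\<bar> < 1" and G: "0 < m" "m \<le> G" "G \<le> M"
  shows "\<theta> * ((cos \<omega> + \<beta> * \<theta>) * G / (ma1_gain \<theta> \<omega> * ma1_gain (\<beta> * \<theta>) \<omega>))
    \<le> M / (2 * (1 - \<beta>)\<^sup>2) - (1 - \<beta>) * m / 16 * (1 / ma1_gain \<theta> \<omega>)"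
proof -
  define A where "A = ma1_gain \<theta> \<omega>"
  define B where "B = ma1_gain (\<beta> * \<theta>) \<omega>"
  define k where "k = 1 - \<theta>\<^sup>2"
  have A: "0 < A"
    using \<theta> ma1_gain_pos by (simp add: A_def)
  have B: "(1 - \<beta>)\<^sup>2 \<le> B" "B \<le> 4"
    using \<beta> \<theta> by (simp_all add: B_def ma1_gain_scaled_bounds)
  have "0 < B"
    using B(1) \<beta> by (smt (verit) zero_less_power2)
  have "1/4 \<le> \<theta>\<^sup>2" "0 \<le> k"
    using \<theta> power_mono[of "1/2" "\<bar>\<theta>\<bar>" 2] abs_square_le_1[of \<theta>] by (auto simp: k_def power2_eq_square)
  have "\<theta> * (cos \<omega> + \<beta> * \<theta>) = (A - k) / 2 - (1 - \<beta>) * \<theta>\<^sup>2"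
    by (simp add: A_def k_def ma1_gain_def algebra_simps power2_eq_square)
  then have "\<theta> * ((cos \<omega> + \<beta> * \<theta>) * G / (A * B)) = ((A - k) / 2 - (1 - \<beta>) * \<theta>\<^sup>2) * G / (A * B)"
    by (metis mult.assoc times_divide_eq_right)
  also have "\<dots> = G / (2 * B) - G * k / (2 * A * B) - (1 - \<beta>) * \<theta>\<^sup>2 * G / (A * B)"
    using A \<open>0 < B\<close> by (simp add: field_simps)
  also have "\<dots> \<le> M / (2 * (1 - \<beta>)\<^sup>2) - 0 - (1 - \<beta>) * m / 16 * (1 / A)"
  proof (intro diff_mono)
    show "G / (2 * B) \<le> M / (2 * (1 - \<beta>)\<^sup>2)"
      using B G \<beta> by (intro frac_le) auto
    show "0 \<le> G * k / (2 * A * B)"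
      using A \<open>0 < B\<close> G \<open>0 \<le> k\<close> by simp
    have "(1 - \<beta>) * (1/4) * m / (A * 4) \<le> (1 - \<beta>) * \<theta>\<^sup>2 * G / (A * B)"
      using A B \<open>0 < B\<close> G \<beta> \<open>1/4 \<le> \<theta>\<^sup>2\<close>
      by (intro frac_le mult_mono mult_pos_pos) auto
    then show "(1 - \<beta>) * m / 16 * (1 / A) \<le> (1 - \<beta>) * \<theta>\<^sup>2 * G / (A * B)"
      by simp
  qed
  finally show ?thesis
    by (simp add: A_def B_def)
qed

lemma theta_R_integrand_le_1:
  assumes \<theta>: "\<bar>\<theta>\<bar> < 1" and G: "0 < m" "m \<le> G" "G \<le> M"
  shows "\<theta> * ((cos \<omega> + \<theta>) * G / (ma1_gain \<theta> \<omega> * ma1_gain \<theta> \<omega>))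
    \<le> M / (4 * (1 - \<theta>\<^sup>2)) - m * (1 - \<theta>\<^sup>2) / 4 * (1 / ma1_gain \<theta> \<omega> ^ 2)"
proof -
  define A where "A = ma1_gain \<theta> \<omega>"
  define k where "k = 1 - \<theta>\<^sup>2"
  define x where "x = 1 / A"
  have A: "0 < A"
    using \<theta> ma1_gain_pos by (simp add: A_def)
  have k: "0 < k"
    using \<theta> abs_square_less_1[of \<theta>] by (simp add: k_def)
  have am_gm: "x / 2 \<le> k * x\<^sup>2 / 4 + 1 / (4 * k)"
  proof -
    have "0 \<le> (k * x - 1)\<^sup>2 / (4 * k)"
      using k by simp
    also have "\<dots> = k * x\<^sup>2 / 4 + 1 / (4 * k) - x / 2"
      using k by (simp add: field_simps power2_eq_square)
    finally show ?thesis
      by simp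
  qed
  have "\<theta> * (cos \<omega> + \<theta>) = (A - k) / 2"
    by (simp add: A_def k_def ma1_gain_def algebra_simps power2_eq_square)
  then have "\<theta> * ((cos \<omega> + \<theta>) * G / (A * A)) = (A - k) / 2 * G / (A * A)"
    by (metis mult.assoc times_divide_eq_right)
  also have "\<dots> = G * (x / 2 - k * x\<^sup>2 / 2)"
    using A by (simp add: x_def field_simps power2_eq_square)
  also have "\<dots> \<le> G * (1 / (4 * k) - k * x\<^sup>2 / 4)"
    using am_gm G by (intro mult_left_mono) auto
  also have "\<dots> = G / (4 * k) - G * (k * x\<^sup>2 / 4)"
    by (simp add: algebra_simps)
  also have "\<dots> \<le> M / (4 * k) - m * (k * x\<^sup>2 / 4)"
    using G k by (intro diff_mono divide_right_mono mult_right_mono) auto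
  finally show ?thesis
    by (simp add: A_def k_def x_def power_one_over)
qed

section \<open>Holomorphic extension of f\<close>

(* f and Lbar of the statement, with the spectral density g_y replaced by an arbitrary g. *)
definition spec_f :: "(real \<Rightarrow> real) \<Rightarrow> real \<Rightarrow> real \<Rightarrow> complex" where
  "spec_f g \<theta> \<beta> = - integral {-pi..pi} (\<lambda>\<omega>.
      (exp (\<i> * complex_of_real \<omega>) + complex_of_real (\<beta> * \<theta>)) /
      complex_of_real ((cmod ((1 + complex_of_real \<theta> * exp (\<i> * complex_of_real \<omega>)) *
                              (1 + complex_of_real (\<beta> * \<theta>) * exp (\<i> * complex_of_real \<omega>))))\<^sup>2)
      * complex_of_real (g \<omega>))"

definition spec_Lbar :: "(real \<Rightarrow> real) \<Rightarrow> real \<Rightarrow> real" where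
  "spec_Lbar g \<theta> = integral {-pi..pi} (\<lambda>\<omega>.
      g \<omega> / (cmod (1 + complex_of_real \<theta> * exp (\<i> * complex_of_real \<omega>)))\<^sup>2)"

definition spec_f_hol :: "(real \<Rightarrow> real) \<Rightarrow> real \<Rightarrow> complex \<Rightarrow> complex" where
  "spec_f_hol g \<beta> z = - integral {-pi..pi} (\<lambda>\<omega>.
      cis \<omega> ^ 2 * complex_of_real (g \<omega>) /
      ((1 + z * cis \<omega>) * (cis \<omega> + z) * (1 + complex_of_real \<beta> * z * cis \<omega>)))"

lemma cis_plus_nonzero: "cmod z < 1 \<Longrightarrow> cis \<omega> + z \<noteq> 0"
  by (rule norm_less_imp_add_nonzero) simp

lemma one_plus_mult_cis_nonzero: "cmod z < 1 \<Longrightarrow> 1 + z * cis \<omega> \<noteq> 0"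
  by (rule norm_less_imp_add_nonzero) (simp add: norm_mult)

lemma unit_circle_integrand_eq:
  fixes e :: complex and t b :: real
  assumes "cmod e = 1" "\<bar>b\<bar> < 1"
  shows "(e + complex_of_real b) /
      complex_of_real ((cmod ((1 + complex_of_real t * e) * (1 + complex_of_real b * e)))\<^sup>2)
    = e ^ 2 / ((1 + complex_of_real t * e) * (e + complex_of_real t) * (1 + complex_of_real b * e))"
proof -
  let ?t = "complex_of_real t" and ?b = "complex_of_real b"
  have conj_factor: "e * cnj (1 + complex_of_real s * e) = e + complex_of_real s" for s
  proof -
    have "e * cnj (1 + complex_of_real s * e) = e + complex_of_real s * (e * cnj e)"
      by (simp add: algebra_simps)
    then show ?thesis
      using assms(1) by (simp add: complex_norm_square[symmetric])
  qed
  have "complex_of_real ((cmod ((1 + ?t * e) * (1 + ?b * e)))\<^sup>2) * e ^ 2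
      = (1 + ?t * e) * (1 + ?b * e) * (e * cnj (1 + ?t * e)) * (e * cnj (1 + ?b * e))"
    by (simp only: complex_norm_square complex_cnj_mult) (simp add: power2_eq_square ac_simps)
  also have "\<dots> = (1 + ?t * e) * (1 + ?b * e) * (e + ?t) * (e + ?b)"
    by (simp only: conj_factor)
  finally have N: "complex_of_real ((cmod ((1 + ?t * e) * (1 + ?b * e)))\<^sup>2) * e ^ 2
      = (1 + ?t * e) * (1 + ?b * e) * (e + ?t) * (e + ?b)" .
  have "e + ?b \<noteq> 0"
    using assms by (intro norm_less_imp_add_nonzero) simp
  have "e \<noteq> 0"
    using assms(1) by auto
  then have "(e + ?b) / complex_of_real ((cmod ((1 + ?t * e) * (1 + ?b * e)))\<^sup>2)
      = e ^ 2 * (e + ?b) / (complex_of_real ((cmod ((1 + ?t * e) * (1 + ?b * e)))\<^sup>2) * e ^ 2)"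
    by (simp add: ac_simps)
  also have "\<dots> = e ^ 2 * (e + ?b) / (((1 + ?t * e) * (e + ?t) * (1 + ?b * e)) * (e + ?b))"
    unfolding N by (simp only: ac_simps)
  also have "\<dots> = e ^ 2 / ((1 + ?t * e) * (e + ?t) * (1 + ?b * e))"
    using \<open>e + ?b \<noteq> 0\<close> by (rule nonzero_mult_divide_mult_cancel_right)
  finally show ?thesis .
qed

lemma spec_f_eq_spec_f_hol:
  assumes "\<bar>\<theta>\<bar> < 1" "\<bar>\<beta>\<bar> \<le> 1"
  shows "spec_f g \<theta> \<beta> = spec_f_hol g \<beta> (complex_of_real \<theta>)"
proof -
  have "\<bar>\<beta> * \<theta>\<bar> < 1"
    using assms(2,1) by (rule abs_mult_less_one)
  then show ?thesis
    unfolding spec_f_def spec_f_hol_def cis_conv_exp[symmetric]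
    by (simp only: unit_circle_integrand_eq[OF norm_cis] times_divide_eq_left) (simp only: of_real_mult)
qed

lemma holomorphic_spec_f_hol:
  assumes g: "continuous_on {-pi..pi} g" and \<beta>: "\<bar>\<beta>\<bar> \<le> 1"
  shows "spec_f_hol g \<beta> holomorphic_on ball 0 1"
proof -
  define b where "b = complex_of_real \<beta>"
  define C where "C \<omega> = cis \<omega> ^ 2 * complex_of_real (g \<omega>)" for \<omega>
  define q where "q e z = (1 + z * e) * (e + z) * (1 + b * z * e)" for e z :: complex
  define dq where "dq e z = e * (e + z) * (1 + b * z * e) + (1 + z * e) * (1 + b * z * e)
      + (1 + z * e) * (e + z) * (b * e)" for e z :: complex
  have q_nonzero: "q (cis \<omega>) z \<noteq> 0" if "z \<in> ball 0 1" for z \<omega>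
  proof -
    have "cmod (b * z) < 1"
      using abs_mult_less_one[OF \<beta>, of "cmod z"] that by (simp add: b_def norm_mult)
    then show ?thesis
      using that by (simp add: q_def one_plus_mult_cis_nonzero cis_plus_nonzero)
  qed
  have q_deriv: "(q e has_field_derivative dq e z) (at z within U)" for e z U
    unfolding q_def dq_def by (rule derivative_eq_intros refl)+ (simp add: algebra_simps)
  have "((\<lambda>z. C \<omega> * inverse (q (cis \<omega>) z)) has_field_derivative
      - C \<omega> * dq (cis \<omega>) z / q (cis \<omega>) z ^ 2) (at z within ball 0 1)"
    if "z \<in> ball 0 1" for z \<omega>
    using DERIV_cmult[OF DERIV_inverse_fun[OF q_deriv q_nonzero[OF that, of \<omega>]], of "C \<omega>"]
    by (simp add: divide_inverse power2_eq_square mult.assoc)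
  moreover have "continuous_on (ball 0 1 \<times> cbox (-pi) pi)
      (\<lambda>(z, \<omega>). - C \<omega> * dq (cis \<omega>) z / q (cis \<omega>) z ^ 2)"
  proof -
    have "continuous_on (ball 0 1 \<times> cbox (-pi) pi) (\<lambda>x. g (snd x))"
      by (rule continuous_on_compose2[OF g]) (auto intro!: continuous_intros)
    moreover have "q (cis (snd x)) (fst x) \<noteq> 0" if "x \<in> ball 0 1 \<times> cbox (-pi) pi" for x
      using that q_nonzero by auto
    ultimately show ?thesis
      unfolding case_prod_beta' C_def q_def dq_def by (intro continuous_intros) auto
  qed
  moreover have "(\<lambda>\<omega>. C \<omega> * inverse (q (cis \<omega>) z)) integrable_on cbox (-pi) pi" if "z \<in> ball 0 1" for z
    using g q_nonzero[OF that] unfolding C_def q_def cbox_interval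
    by (intro integrable_continuous_interval continuous_intros) auto
  ultimately have "(\<lambda>z. integral (cbox (-pi) pi) (\<lambda>\<omega>. C \<omega> * inverse (q (cis \<omega>) z))) holomorphic_on ball 0 1"
    by (intro leibniz_rule_holomorphic) auto
  moreover have "spec_f_hol g \<beta> = (\<lambda>z. - integral (cbox (-pi) pi) (\<lambda>\<omega>. C \<omega> * inverse (q (cis \<omega>) z)))"
    by (simp add: fun_eq_iff spec_f_hol_def C_def q_def b_def cbox_interval divide_inverse)
  ultimately show ?thesis
    by (simp add: holomorphic_on_minus)
qed

lemma C_infinity_on_spec_f:
  assumes "continuous_on {-pi..pi} g" "\<bar>\<beta>\<bar> \<le> 1"
  shows "C_infinity_on {-1<..<1} (\<lambda>\<theta>. spec_f g \<theta> \<beta>)"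
proof -
  have "C_infinity_on {-1<..<1} (\<lambda>\<theta>. spec_f_hol g \<beta> (complex_of_real \<theta>))"
    using holomorphic_spec_f_hol[OF assms] by (rule C_infinity_on_holomorphic_of_real) auto
  moreover have "spec_f g \<theta> \<beta> = spec_f_hol g \<beta> (complex_of_real \<theta>)" if "\<theta> \<in> {-1<..<1}" for \<theta>
    using that assms(2) by (intro spec_f_eq_spec_f_hol) auto
  ultimately show ?thesis
    unfolding C_infinity_on_def by auto
qed

section \<open>Zeros of f and minimizers of Lbar\<close>

lemma spec_f_integrand_eq:
  fixes \<theta> \<beta> \<omega> :: real
  defines "N \<equiv> ma1_gain \<theta> \<omega> * ma1_gain (\<beta> * \<theta>) \<omega>"
  shows "(exp (\<i> * complex_of_real \<omega>) + complex_of_real (\<beta> * \<theta>)) /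
      complex_of_real ((cmod ((1 + complex_of_real \<theta> * exp (\<i> * complex_of_real \<omega>)) *
                              (1 + complex_of_real (\<beta> * \<theta>) * exp (\<i> * complex_of_real \<omega>))))\<^sup>2)
      * complex_of_real (g \<omega>)
    = complex_of_real ((cos \<omega> + \<beta> * \<theta>) * g \<omega> / N) + \<i> * complex_of_real (sin \<omega> * g \<omega> / N)"
proof -
  have N: "(cmod ((1 + complex_of_real \<theta> * cis \<omega>) * (1 + complex_of_real (\<beta> * \<theta>) * cis \<omega>)))\<^sup>2 = N"
    by (simp only: N_def norm_mult power_mult_distrib cmod_one_plus_cis_square)
  show ?thesis
    unfolding cis_conv_exp[symmetric] N unfolding cis.ctr by (simp add: complex_eq_iff)
qed

locale spectral_density =
  fixes g :: "real \<Rightarrow> real"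
  assumes continuous: "continuous_on {-pi..pi} g"
    and pos: "\<And>\<omega>. \<omega> \<in> {-pi..pi} \<Longrightarrow> 0 < g \<omega>"
    and even: "\<And>\<omega>. g (-\<omega>) = g \<omega>"
begin

lemma bounds:
  obtains m M where "0 < m" "\<And>\<omega>. \<omega> \<in> {-pi..pi} \<Longrightarrow> m \<le> g \<omega> \<and> g \<omega> \<le> M"
proof -
  obtain x where "x \<in> {-pi..pi}" "\<forall>y\<in>{-pi..pi}. g x \<le> g y"
    using continuous_attains_inf[OF compact_Icc _ continuous] by auto
  moreover obtain X where "\<forall>y\<in>{-pi..pi}. g y \<le> g X"
    using continuous_attains_sup[OF compact_Icc _ continuous] by auto
  ultimately show ?thesis
    using that[of "g x" "g X"] pos by blast
qed

definition R :: "real \<Rightarrow> real \<Rightarrow> real" where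
  "R \<beta> \<theta> = integral {-pi..pi} (\<lambda>\<omega>. (cos \<omega> + \<beta> * \<theta>) * g \<omega> / (ma1_gain \<theta> \<omega> * ma1_gain (\<beta> * \<theta>) \<omega>))"

lemma continuous_on_R_integrand:
  assumes "\<bar>\<theta>\<bar> < 1" "\<bar>\<beta>\<bar> \<le> 1"
  shows "continuous_on {-pi..pi} (\<lambda>\<omega>. (cos \<omega> + \<beta> * \<theta>) * g \<omega> / (ma1_gain \<theta> \<omega> * ma1_gain (\<beta> * \<theta>) \<omega>))"
proof -
  have "ma1_gain \<theta> \<omega> * ma1_gain (\<beta> * \<theta>) \<omega> \<noteq> 0" for \<omega>
    using ma1_gain_mult_pos[OF assms] by (metis less_irrefl)
  then show ?thesis
    using continuous by (auto intro!: continuous_intros)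
qed

lemma spec_f_eq_R:
  assumes "\<bar>\<theta>\<bar> < 1" "\<bar>\<beta>\<bar> \<le> 1"
  shows "spec_f g \<theta> \<beta> = - complex_of_real (R \<beta> \<theta>)"
proof -
  define N where "N \<omega> = ma1_gain \<theta> \<omega> * ma1_gain (\<beta> * \<theta>) \<omega>" for \<omega>
  define r where "r \<omega> = (cos \<omega> + \<beta> * \<theta>) * g \<omega> / N \<omega>" for \<omega>
  define s where "s \<omega> = sin \<omega> * g \<omega> / N \<omega>" for \<omega>
  have "N \<omega> \<noteq> 0" for \<omega>
    using ma1_gain_mult_pos[OF assms] by (metis N_def less_irrefl)
  then have "continuous_on {-pi..pi} s"
    unfolding s_def N_def using continuous by (auto intro!: continuous_intros)
  moreover have "continuous_on {-pi..pi} r"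
    unfolding r_def N_def using assms by (rule continuous_on_R_integrand)
  ultimately have "r integrable_on {-pi..pi}" "s integrable_on {-pi..pi}"
    by (auto intro: integrable_continuous_interval)
  then have "((\<lambda>\<omega>. complex_of_real (r \<omega>) + \<i> * complex_of_real (s \<omega>)) has_integral
      complex_of_real (integral {-pi..pi} r) + \<i> * complex_of_real (integral {-pi..pi} s)) {-pi..pi}"
    by (intro has_integral_add has_integral_mult_right has_integral_of_real integrable_integral)
  moreover have "integral {-pi..pi} s = 0"
    by (rule integral_odd_eq_0) (simp add: s_def N_def ma1_gain_def even)
  ultimately show ?thesis
    unfolding spec_f_def spec_f_integrand_eq R_def N_def[symmetric] r_def[symmetric] s_def[symmetric]
    by (simp add: integral_unique)
qed

lemma continuous_on_R:
  assumes "\<bar>\<beta>\<bar> \<le> 1"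
  shows "continuous_on {-1<..<1} (R \<beta>)"
proof -
  have "continuous_on {-1<..<1} (\<lambda>\<theta>. - Re (spec_f g \<theta> \<beta>))"
    using C_infinity_on_imp_continuous_on[OF C_infinity_on_spec_f[OF continuous assms]]
    by (intro continuous_intros)
  then show ?thesis
    by (rule continuous_on_eq) (use assms in \<open>auto simp: spec_f_eq_R abs_less_iff\<close>)
qed

lemma spec_f_zeros_eq_R_zeros:
  assumes "\<bar>\<beta>\<bar> \<le> 1"
  shows "{\<theta>\<in>{-1<..<1}. spec_f g \<theta> \<beta> = 0} = {\<theta>\<in>{-1<..<1}. R \<beta> \<theta> = 0}"
  using assms by (auto simp: spec_f_eq_R abs_less_iff)

lemma theta_R_le:
  assumes \<theta>: "\<bar>\<theta>\<bar> < 1" and \<beta>: "\<bar>\<beta>\<bar> \<le> 1" and h: "continuous_on {-pi..pi} h"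
    and bound: "\<And>\<omega>. \<omega> \<in> {-pi..pi} \<Longrightarrow>
      \<theta> * ((cos \<omega> + \<beta> * \<theta>) * g \<omega> / (ma1_gain \<theta> \<omega> * ma1_gain (\<beta> * \<theta>) \<omega>)) \<le> C - c * h \<omega>"
    and "0 \<le> c" "y \<le> integral {-pi..pi} h"
  shows "\<theta> * R \<beta> \<theta> \<le> 2 * pi * C - c * y"
proof -
  have "\<theta> * R \<beta> \<theta> = integral {-pi..pi}
      (\<lambda>\<omega>. \<theta> * ((cos \<omega> + \<beta> * \<theta>) * g \<omega> / (ma1_gain \<theta> \<omega> * ma1_gain (\<beta> * \<theta>) \<omega>)))"
    unfolding R_def by (rule integral_mult_right[symmetric])
  also have "\<dots> \<le> C * (pi - - pi) - c * integral {-pi..pi} h"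
    using continuous_on_mult_left[OF continuous_on_R_integrand[OF \<theta> \<beta>]] h _ bound
    by (rule integral_le_affine_bound) simp
  also have "\<dots> \<le> 2 * pi * C - c * y"
    using mult_left_mono[OF assms(6,5)] by simp
  finally show ?thesis .
qed

lemma R_sign_near_boundary_lt1:
  assumes \<beta>: "0 \<le> \<beta>" "\<beta> < 1"
  shows "\<exists>a<1. \<forall>\<theta>. a < \<bar>\<theta>\<bar> \<longrightarrow> \<bar>\<theta>\<bar> < 1 \<longrightarrow> \<theta> * R \<beta> \<theta> < 0"
proof -
  obtain m M where m: "0 < m" and mM: "\<And>\<omega>. \<omega> \<in> {-pi..pi} \<Longrightarrow> m \<le> g \<omega> \<and> g \<omega> \<le> M"
    using bounds by blast
  have "0 < M"
    using mM[of 0] m by auto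
  define C where "C = M / (2 * (1 - \<beta>)\<^sup>2)"
  define c where "c = (1 - \<beta>) * m / 16"
  have "0 < C" "0 < c"
    using \<open>0 < M\<close> m \<beta> by (simp_all add: C_def c_def)
  define a where "a = max (1/2) (1 - c / (4 * pi * C))"
  show ?thesis
  proof (intro exI conjI allI impI)
    show "a < 1"
      using \<open>0 < C\<close> \<open>0 < c\<close> by (simp add: a_def)
    fix \<theta> :: real
    assume \<theta>: "a < \<bar>\<theta>\<bar>" "\<bar>\<theta>\<bar> < 1"
    define l where "l = 1 - \<bar>\<theta>\<bar>"
    have "l < c / (4 * pi * C)"
      using \<theta> by (simp add: l_def a_def)
    then have l: "0 < l" "l * (4 * pi * C) < c"
      using \<theta> \<open>0 < C\<close> by (simp_all add: l_def pos_less_divide_eq)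
    have "\<theta> * R \<beta> \<theta> \<le> 2 * pi * C - c * (l / (2 * l\<^sup>2) ^ 1)"
    proof (rule theta_R_le[where h = "\<lambda>\<omega>. 1 / ma1_gain \<theta> \<omega> ^ 1"])
      show "continuous_on {-pi..pi} (\<lambda>\<omega>. 1 / ma1_gain \<theta> \<omega> ^ 1)"
        using ma1_gain_pos[OF \<theta>(2), THEN order_less_imp_not_eq2] by (intro continuous_intros) auto
      show "l / (2 * l\<^sup>2) ^ 1 \<le> integral {-pi..pi} (\<lambda>\<omega>. 1 / ma1_gain \<theta> \<omega> ^ 1)"
        using integral_inverse_ma1_gain_power_ge[of \<theta> 1] \<theta> by (simp add: l_def)
      fix \<omega> assume "\<omega> \<in> {-pi..pi}"
      then show "\<theta> * ((cos \<omega> + \<beta> * \<theta>) * g \<omega> / (ma1_gain \<theta> \<omega> * ma1_gain (\<beta> * \<theta>) \<omega>))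
          \<le> C - c * (1 / ma1_gain \<theta> \<omega> ^ 1)"
        using theta_R_integrand_le_lt1[of \<beta> \<theta> m "g \<omega>" M \<omega>] \<beta> \<theta> m mM
        by (simp add: C_def c_def a_def)
    qed (use \<theta> \<beta> \<open>0 < c\<close> in auto)
    also have "\<dots> < 0"
      using l by (simp add: field_simps power2_eq_square)
    finally show "\<theta> * R \<beta> \<theta> < 0" .
  qed
qed

lemma R_1_sign_near_boundary:
  "\<exists>a<1. \<forall>\<theta>. a < \<bar>\<theta>\<bar> \<longrightarrow> \<bar>\<theta>\<bar> < 1 \<longrightarrow> \<theta> * R 1 \<theta> < 0"
proof -
  obtain m M where m: "0 < m" and mM: "\<And>\<omega>. \<omega> \<in> {-pi..pi} \<Longrightarrow> m \<le> g \<omega> \<and> g \<omega> \<le> M"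
    using bounds by blast
  have "0 < M"
    using mM[of 0] m by auto
  define a where "a = 1 - m / (8 * pi * M)"
  show ?thesis
  proof (intro exI conjI allI impI)
    show "a < 1"
      using \<open>0 < M\<close> m by (simp add: a_def)
    fix \<theta> :: real
    assume \<theta>: "a < \<bar>\<theta>\<bar>" "\<bar>\<theta>\<bar> < 1"
    define l where "l = 1 - \<bar>\<theta>\<bar>"
    define k where "k = 1 - \<theta>\<^sup>2"
    have l: "0 < l" "l * (8 * pi * M) < m"
      using \<theta> \<open>0 < M\<close> by (auto simp: l_def a_def field_simps)
    have "k = l * (1 + \<bar>\<theta>\<bar>)"
      by (simp add: k_def l_def power2_eq_square algebra_simps)
    then have k: "l \<le> k"
      using l by simp
    have "\<theta> * R 1 \<theta> \<le> 2 * pi * (M / (4 * k)) - m * k / 4 * (l / (2 * l\<^sup>2) ^ 2)"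
    proof (rule theta_R_le[where h = "\<lambda>\<omega>. 1 / ma1_gain \<theta> \<omega> ^ 2"])
      show "continuous_on {-pi..pi} (\<lambda>\<omega>. 1 / ma1_gain \<theta> \<omega> ^ 2)"
        using ma1_gain_pos[OF \<theta>(2), THEN order_less_imp_not_eq2] by (intro continuous_intros) auto
      show "l / (2 * l\<^sup>2) ^ 2 \<le> integral {-pi..pi} (\<lambda>\<omega>. 1 / ma1_gain \<theta> \<omega> ^ 2)"
        using integral_inverse_ma1_gain_power_ge[of \<theta> 2] \<theta> by (simp add: l_def)
      fix \<omega> assume "\<omega> \<in> {-pi..pi}"
      then show "\<theta> * ((cos \<omega> + 1 * \<theta>) * g \<omega> / (ma1_gain \<theta> \<omega> * ma1_gain (1 * \<theta>) \<omega>))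
          \<le> M / (4 * k) - m * k / 4 * (1 / ma1_gain \<theta> \<omega> ^ 2)"
        using theta_R_integrand_le_1[of \<theta> m "g \<omega>" M \<omega>] \<theta> m mM by (simp add: k_def)
    qed (use \<theta> m k l in auto)
    also have "\<dots> < 0"
    proof -
      have "pi * M * l ^ 3 * 8 < m * l\<^sup>2"
        using l by (simp add: power2_eq_square power3_eq_cube mult.commute mult.left_commute)
      also have "\<dots> \<le> m * k\<^sup>2"
        using k l m by (intro mult_left_mono power_mono) auto
      finally show ?thesis
        using l k by (simp add: field_simps power2_eq_square power3_eq_cube)
    qed
    finally show "\<theta> * R 1 \<theta> < 0" .
  qed
qed

lemma R_sign_near_boundary:
  assumes "\<beta> \<in> {0..1}"
  shows "\<exists>a<1. \<forall>\<theta>. a < \<bar>\<theta>\<bar> \<longrightarrow> \<bar>\<theta>\<bar> < 1 \<longrightarrow> \<theta> * R \<beta> \<theta> < 0"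
  using assms R_sign_near_boundary_lt1 R_1_sign_near_boundary
  by (cases "\<beta> = 1") auto

lemma spec_f_zeros_nonempty_compact:
  assumes \<beta>: "\<beta> \<in> {0..1}"
  shows "{\<theta>\<in>{-1<..<1}. spec_f g \<theta> \<beta> = 0} \<noteq> {}" "compact {\<theta>\<in>{-1<..<1}. spec_f g \<theta> \<beta> = 0}"
proof -
  have "\<bar>\<beta>\<bar> \<le> 1"
    using \<beta> by simp
  obtain a where a: "a < 1" and sign: "\<And>\<theta>. a < \<bar>\<theta>\<bar> \<Longrightarrow> \<bar>\<theta>\<bar> < 1 \<Longrightarrow> \<theta> * R \<beta> \<theta> < 0"
    using R_sign_near_boundary[OF \<beta>] by blast
  show "{\<theta>\<in>{-1<..<1}. spec_f g \<theta> \<beta> = 0} \<noteq> {}"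
    unfolding spec_f_zeros_eq_R_zeros[OF \<open>\<bar>\<beta>\<bar> \<le> 1\<close>] using continuous_on_R[OF \<open>\<bar>\<beta>\<bar> \<le> 1\<close>] a sign
    by (rule zeros_nonempty_compact_if_sign_near_boundary(1))
  show "compact {\<theta>\<in>{-1<..<1}. spec_f g \<theta> \<beta> = 0}"
    unfolding spec_f_zeros_eq_R_zeros[OF \<open>\<bar>\<beta>\<bar> \<le> 1\<close>] using continuous_on_R[OF \<open>\<bar>\<beta>\<bar> \<le> 1\<close>] a sign
    by (rule zeros_nonempty_compact_if_sign_near_boundary(2))
qed

lemma spec_Lbar_eq: "spec_Lbar g \<theta> = integral {-pi..pi} (\<lambda>\<omega>. g \<omega> / ma1_gain \<theta> \<omega>)"
  unfolding spec_Lbar_def cis_conv_exp[symmetric] cmod_one_plus_cis_square ..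

lemma has_real_derivative_spec_Lbar:
  assumes "\<bar>\<theta>\<bar> < 1"
  shows "(spec_Lbar g has_real_derivative -2 * R 1 \<theta>) (at \<theta>)"
proof -
  let ?U = "{-1<..<1} :: real set"
  let ?r = "\<lambda>x \<omega>. (cos \<omega> + 1 * x) * g \<omega> / (ma1_gain x \<omega> * ma1_gain (1 * x) \<omega>)"
  have nonzero: "ma1_gain x \<omega> \<noteq> 0" if "x \<in> ?U" for x \<omega>
    using that ma1_gain_pos[of x \<omega>] by (auto simp: abs_less_iff)
  have "((\<lambda>x. g \<omega> / ma1_gain x \<omega>) has_field_derivative -2 * ?r x \<omega>) (at x within ?U)"
    if "x \<in> ?U" for x \<omega>
    unfolding ma1_gain_def using nonzero[OF that, of \<omega>] unfolding ma1_gain_def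
    by (auto intro!: derivative_eq_intros simp: field_simps power2_eq_square)
  moreover have "(\<lambda>\<omega>. g \<omega> / ma1_gain x \<omega>) integrable_on cbox (-pi) pi" if "x \<in> ?U" for x
    using continuous nonzero[OF that] unfolding cbox_interval
    by (intro integrable_continuous_interval continuous_intros) auto
  moreover have "continuous_on (?U \<times> cbox (-pi) pi) (\<lambda>(x, \<omega>). -2 * ?r x \<omega>)"
  proof -
    have "continuous_on (?U \<times> cbox (-pi) pi) (\<lambda>p. g (snd p))"
      by (rule continuous_on_compose2[OF continuous]) (auto intro!: continuous_intros)
    then show ?thesis
      unfolding case_prod_beta' using nonzero by (intro continuous_intros) auto
  qed
  ultimately have "((\<lambda>x. integral (cbox (-pi) pi) (\<lambda>\<omega>. g \<omega> / ma1_gain x \<omega>)) has_field_derivative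
      integral (cbox (-pi) pi) (\<lambda>\<omega>. -2 * ?r \<theta> \<omega>)) (at \<theta> within ?U)"
    using assms by (intro leibniz_rule_field_derivative) (auto simp: abs_less_iff)
  moreover have "at \<theta> within ?U = at \<theta>"
    using assms by (intro at_within_open) (auto simp: abs_less_iff)
  moreover have "integral (cbox (-pi) pi) (\<lambda>\<omega>. -2 * ?r \<theta> \<omega>) = -2 * R 1 \<theta>"
    unfolding R_def cbox_interval by (rule integral_mult_right)
  moreover have "spec_Lbar g = (\<lambda>x. integral (cbox (-pi) pi) (\<lambda>\<omega>. g \<omega> / ma1_gain x \<omega>))"
    by (simp add: fun_eq_iff spec_Lbar_eq cbox_interval)
  ultimately show ?thesis
    by (simp only:)
qed

lemma spec_Lbar_ge:
  assumes "\<bar>\<theta>\<bar> < 1" "0 \<le> m" "\<And>\<omega>. \<omega> \<in> {-pi..pi} \<Longrightarrow> m \<le> g \<omega>"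
  shows "m / (2 * (1 - \<bar>\<theta>\<bar>)) \<le> spec_Lbar g \<theta>"
proof -
  have pos: "0 < ma1_gain \<theta> \<omega>" for \<omega>
    using assms(1) by (rule ma1_gain_pos)
  then have nonzero: "ma1_gain \<theta> \<omega> \<noteq> 0" for \<omega>
    by (metis less_irrefl)
  have "m / (2 * (1 - \<bar>\<theta>\<bar>)) = m * ((1 - \<bar>\<theta>\<bar>) / (2 * (1 - \<bar>\<theta>\<bar>)\<^sup>2) ^ 1)"
    using assms(1) by (simp add: power2_eq_square)
  also have "\<dots> \<le> m * integral {-pi..pi} (\<lambda>\<omega>. 1 / ma1_gain \<theta> \<omega> ^ 1)"
    using integral_inverse_ma1_gain_power_ge[OF assms(1), of 1] assms(2) by (rule mult_left_mono)
  also have "\<dots> = integral {-pi..pi} (\<lambda>\<omega>. m * (1 / ma1_gain \<theta> \<omega>))"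
    by (simp only: power_one_right integral_mult_right)
  also have "\<dots> \<le> integral {-pi..pi} (\<lambda>\<omega>. g \<omega> / ma1_gain \<theta> \<omega>)"
    using continuous assms(3) pos nonzero
    by (intro integral_le integrable_continuous_interval continuous_intros)
      (auto intro!: divide_right_mono less_imp_le[OF pos])
  finally show ?thesis
    by (simp add: spec_Lbar_eq)
qed

lemma spec_Lbar_minimizers_nonempty:
  "{\<theta>\<in>{-1<..<1}. \<forall>\<theta>'\<in>{-1<..<1}. spec_Lbar g \<theta> \<le> spec_Lbar g \<theta>'} \<noteq> {}"
proof -
  obtain m M where m: "0 < m" and mM: "\<And>\<omega>. \<omega> \<in> {-pi..pi} \<Longrightarrow> m \<le> g \<omega> \<and> g \<omega> \<le> M"
    using bounds by blast
  define L0 where "L0 = spec_Lbar g 0"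
  have "continuous_on {-1<..<1} (spec_Lbar g)"
    by (intro continuous_at_imp_continuous_on ballI DERIV_isCont[OF has_real_derivative_spec_Lbar]) auto
  moreover have "L0 < spec_Lbar g \<theta>"
    if "1 - m / (2 * (\<bar>L0\<bar> + 1)) < \<bar>\<theta>\<bar>" "\<bar>\<theta>\<bar> < 1" for \<theta>
  proof -
    have "(1 - \<bar>\<theta>\<bar>) * (2 * (\<bar>L0\<bar> + 1)) < m"
      using that by (simp add: field_simps)
    then have "\<bar>L0\<bar> + 1 < m / (2 * (1 - \<bar>\<theta>\<bar>))"
      using that by (simp add: pos_less_divide_eq algebra_simps)
    then have "L0 < m / (2 * (1 - \<bar>\<theta>\<bar>))"
      by linarith
    also have "\<dots> \<le> spec_Lbar g \<theta>"
      using that m mM by (intro spec_Lbar_ge) auto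
    finally show ?thesis .
  qed
  ultimately show ?thesis
    using m unfolding L0_def by (intro minimizers_nonempty_if_grows_near_boundary) auto
qed

lemma spec_Lbar_minimizers_subset_R_zeros:
  "{\<theta>\<in>{-1<..<1}. \<forall>\<theta>'\<in>{-1<..<1}. spec_Lbar g \<theta> \<le> spec_Lbar g \<theta>'} \<subseteq> {\<theta>\<in>{-1<..<1}. R 1 \<theta> = 0}"
proof safe
  fix \<theta> :: real
  assume \<theta>: "\<theta> \<in> {-1<..<1}" and min: "\<forall>\<theta>'\<in>{-1<..<1}. spec_Lbar g \<theta> \<le> spec_Lbar g \<theta>'"
  have "\<bar>\<theta>\<bar> < 1"
    using \<theta> by auto
  moreover have "\<forall>y. \<bar>\<theta> - y\<bar> < 1 - \<bar>\<theta>\<bar> \<longrightarrow> spec_Lbar g \<theta> \<le> spec_Lbar g y"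
  proof safe
    fix y :: real
    assume "\<bar>\<theta> - y\<bar> < 1 - \<bar>\<theta>\<bar>"
    then have "y \<in> {-1<..<1}"
      by auto
    then show "spec_Lbar g \<theta> \<le> spec_Lbar g y"
      using min by blast
  qed
  ultimately have "-2 * R 1 \<theta> = 0"
    by (intro DERIV_local_min[OF has_real_derivative_spec_Lbar]) auto
  then show "R 1 \<theta> = 0"
    by simp
qed

lemma spec_Lbar_minimizers_subset_spec_f_zeros:
  "{\<theta>\<in>{-1<..<1}. \<forall>\<theta>'\<in>{-1<..<1}. spec_Lbar g \<theta> \<le> spec_Lbar g \<theta>'} \<subseteq> {\<theta>\<in>{-1<..<1}. spec_f g \<theta> 1 = 0}"
proof -
  have one: "\<bar>1::real\<bar> \<le> 1"
    by simp
  from spec_Lbar_minimizers_subset_R_zeros show ?thesis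
    unfolding spec_f_zeros_eq_R_zeros[OF one] .
qed

end

section \<open>The spectral density of a linear process\<close>

lemma norm_kappa_term_le:
  assumes "cmod z \<le> 1"
  shows "norm (complex_of_real (\<kappa> n) * z ^ n) \<le> \<bar>\<kappa> n\<bar>"
proof -
  have "cmod z ^ n \<le> 1"
    using assms by (simp add: power_le_one)
  then show ?thesis
    by (simp add: norm_mult norm_power mult_left_le)
qed

lemma continuous_on_kappa_fun:
  assumes "summable (\<lambda>s. \<bar>\<kappa> s\<bar>)"
  shows "continuous_on (cball 0 1) (kappa_fun \<kappa>)"
proof -
  have ul: "uniform_limit (cball 0 1) (\<lambda>n z. \<Sum>i<n. complex_of_real (\<kappa> i) * z ^ i)
      (\<lambda>z. \<Sum>i. complex_of_real (\<kappa> i) * z ^ i) sequentially"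
    by (rule Weierstrass_m_test[OF _ assms]) (simp add: norm_kappa_term_le)
  show ?thesis
    unfolding kappa_fun_def
    by (rule uniform_limit_theorem[OF _ ul]) (auto intro!: always_eventually continuous_intros)
qed

lemma kappa_fun_cnj:
  assumes "summable (\<lambda>s. \<bar>\<kappa> s\<bar>)" "cmod z \<le> 1"
  shows "kappa_fun \<kappa> (cnj z) = cnj (kappa_fun \<kappa> z)"
proof -
  have "summable (\<lambda>s. complex_of_real (\<kappa> s) * z ^ s)"
    using assms norm_kappa_term_le by (blast intro: summable_comparison_test')
  then have "(\<lambda>s. cnj (complex_of_real (\<kappa> s) * z ^ s)) sums cnj (kappa_fun \<kappa> z)"
    unfolding kappa_fun_def by (intro sums_cnj[THEN iffD2] summable_sums)
  then show ?thesis
    unfolding kappa_fun_def by (simp add: sums_iff)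
qed

lemma spectral_density_g_y:
  assumes "\<sigma>2 > 0" "summable (\<lambda>s. \<bar>\<kappa> s\<bar>)" "\<And>z. cmod z \<le> 1 \<Longrightarrow> kappa_fun \<kappa> z \<noteq> 0"
  shows "spectral_density (g_y \<sigma>2 \<kappa>)"
proof
  have "continuous_on UNIV (\<lambda>\<omega>. kappa_fun \<kappa> (cis \<omega>))"
    by (rule continuous_on_compose2[OF continuous_on_kappa_fun[OF assms(2)]]) (auto intro!: continuous_intros)
  then show "continuous_on {-pi..pi} (g_y \<sigma>2 \<kappa>)"
    unfolding g_y_def[abs_def] cis_conv_exp[symmetric]
    by (auto intro!: continuous_intros intro: continuous_on_subset)
  show "0 < g_y \<sigma>2 \<kappa> \<omega>" for \<omega>
    using assms(1) assms(3)[of "cis \<omega>"] by (simp add: g_y_def cis_conv_exp[symmetric])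
  show "g_y \<sigma>2 \<kappa> (-\<omega>) = g_y \<sigma>2 \<kappa> \<omega>" for \<omega>
    using kappa_fun_cnj[OF assms(2), of "cis \<omega>"] unfolding g_y_def cis_conv_exp[symmetric]
    by (simp add: cis_cnj)
qed

theorem proposition4p4:
  fixes \<sigma>2 :: real and \<kappa> :: "nat \<Rightarrow> real"
  assumes "\<sigma>2 > 0"
    and "\<kappa> 0 = 1"
    and "summable (\<lambda>s. \<bar>\<kappa> s\<bar>)"
    and "\<And>z. cmod z \<le> 1 \<Longrightarrow> kappa_fun \<kappa> z \<noteq> 0"
  shows "(\<forall>\<beta>\<in>{0..1}.
           C_infinity_on {-1<..<1} (\<lambda>\<theta>. f_fun \<sigma>2 \<kappa> \<theta> \<beta>) \<and>
           {\<theta>\<in>{-1<..<1}. f_fun \<sigma>2 \<kappa> \<theta> \<beta> = 0} \<noteq> {} \<and>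
           compact {\<theta>\<in>{-1<..<1}. f_fun \<sigma>2 \<kappa> \<theta> \<beta> = 0})
         \<and> {\<theta>\<in>{-1<..<1}. \<forall>\<theta>'\<in>{-1<..<1}. Lbar \<sigma>2 \<kappa> \<theta> \<le> Lbar \<sigma>2 \<kappa> \<theta>'} \<noteq> {} \<and>
         {\<theta>\<in>{-1<..<1}. \<forall>\<theta>'\<in>{-1<..<1}. Lbar \<sigma>2 \<kappa> \<theta> \<le> Lbar \<sigma>2 \<kappa> \<theta>'}
           \<subseteq> {\<theta>\<in>{-1<..<1}. f_fun \<sigma>2 \<kappa> \<theta> 1 = 0}"
proof -
  interpret spectral_density "g_y \<sigma>2 \<kappa>"
    using assms(1,3,4) by (rule spectral_density_g_y)
  have "f_fun \<sigma>2 \<kappa> = spec_f (g_y \<sigma>2 \<kappa>)" "Lbar \<sigma>2 \<kappa> = spec_Lbar (g_y \<sigma>2 \<kappa>)"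
    by (simp_all add: fun_eq_iff f_fun_def spec_f_def Lbar_def spec_Lbar_def)
  then show ?thesis
    using C_infinity_on_spec_f[OF continuous] spec_f_zeros_nonempty_compact
      spec_Lbar_minimizers_nonempty spec_Lbar_minimizers_subset_spec_f_zeros
    by auto
qed

end
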